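(* For all $k,n\in\mathbb{N}_0$, $$\rho_k(n)+k\,\rho_k(\infty)<(k+1)\,\rho_k(n+1).$$
   Context: For $k\in\mathbb{N}_0$ put $t=k+2$ and define $u_0=0$, $u_1=1$, $u_{i+2}=tu_{i+1}-u_i$; $\rho_k(0)=0$ and $\rho_k(n)=1+\frac{u_{n-1}}{u_n+1}$ for $n\in\mathbb{N}$; $\rho_k(\infty)=\lim_{n\to\infty}\rho_k(n)$ (equal to $2$ for $k=0$). *)

theory Defs
  imports Complex_Main
begin

fun u :: "nat \<Rightarrow> nat \<Rightarrow> real" where
  "u k 0 = 0"
| "u k (Suc 0) = 1"
| "u k (Suc (Suc i)) = (real k + 2) * u k (Suc i) - u k i"

definition rho :: "nat \<Rightarrow> nat \<Rightarrow> real" where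
  "rho k n = (if n = 0 then 0 else 1 + u k (n - 1) / (u k n + 1))"

definition rho_inf :: "nat \<Rightarrow> real" where
  "rho_inf k = lim (\<lambda>n. rho k n)"

end

theory Submission
  imports Defs
begin

text \<open>
  Let mu be the smaller root of x^2 - (k + 2) x + 1, so 0 < mu \<le> 1. The recurrence gives
  mu u(n+1) - u(n) = mu^(n+1), hence rho_k(n) = 1 + mu - (mu + mu^n) / (u(n) + 1) for every n,
  including n = 0. The subtracted gap tends to 0, so rho_k(\<infinity>) = 1 + mu, and the claim becomes
  (k + 1) gap(n + 1) < gap(n). Eliminating k through (k + 1) mu = 1 - mu + mu^2 turns this into a
  polynomial inequality in mu, mu^n and u(n), which holds because mu^n u(n) is nondecreasing
  and hence at least mu for n \<ge> 1.
\<close>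

definition mu :: "nat \<Rightarrow> real" where
  "mu k = (real k + 2 - sqrt ((real k + 2)\<^sup>2 - 4)) / 2"

lemma mu_pos: "0 < mu k"
proof -
  have "sqrt ((real k + 2)\<^sup>2 - 4) < sqrt ((real k + 2)\<^sup>2)"
    by (rule real_sqrt_less_mono) simp
  then show ?thesis
    by (simp add: mu_def)
qed

lemma mu_le_one: "mu k \<le> 1"
proof -
  have "(real k)\<^sup>2 \<le> (real k + 2)\<^sup>2 - 4"
    by (simp add: power2_eq_square algebra_simps)
  then show ?thesis
    by (simp add: mu_def real_le_rsqrt)
qed

lemma mu_root: "(mu k)\<^sup>2 + 1 = (real k + 2) * mu k"
proof -
  define s where "s = sqrt ((real k + 2)\<^sup>2 - 4)"
  have "s\<^sup>2 = (real k + 2)\<^sup>2 - 4"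
    unfolding s_def by (simp add: power2_eq_square algebra_simps)
  moreover have "mu k = (real k + 2 - s) / 2"
    unfolding s_def mu_def ..
  ultimately show ?thesis by algebra
qed

lemma u_Suc_ge: "u k n + 1 \<le> u k (Suc n)"
proof -
  have "0 \<le> u k n \<and> u k n + 1 \<le> u k (Suc n)"
  proof (induction n)
    case (Suc n)
    then have "0 \<le> real k * u k (Suc n)" by simp
    moreover have "u k (Suc (Suc n)) - u k (Suc n) = real k * u k (Suc n) + (u k (Suc n) - u k n)"
      by (simp add: algebra_simps)
    ultimately show ?case using Suc by linarith
  qed simp
  then show ?thesis ..
qed

lemma u_ge: "real n \<le> u k n"
proof (induction n)
  case (Suc n)
  then show ?case using u_Suc_ge[of k n] by simp
qed simp

lemma u_Suc_mult_root:
  assumes "\<mu>\<^sup>2 + 1 = (real k + 2) * \<mu>"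
  shows "\<mu> * u k (Suc n) - u k n = \<mu> ^ Suc n"
proof (induction n)
  case (Suc n)
  have "\<mu> * u k (Suc (Suc n)) - u k (Suc n) = ((real k + 2) * \<mu> - 1) * u k (Suc n) - \<mu> * u k n"
    by (simp add: algebra_simps)
  also have "\<dots> = \<mu> * (\<mu> * u k (Suc n) - u k n)"
    using assms by algebra
  finally show ?case using Suc by simp
qed simp

lemma mu_le_mu_pow_mult_u:
  assumes "1 \<le> n"
  shows "mu k \<le> mu k ^ n * u k n"
  using assms
proof (induction n rule: dec_induct)
  case (step n)
  have "mu k ^ Suc n * u k (Suc n) = mu k ^ n * (mu k * u k (Suc n))"
    by simp
  also have "\<dots> = mu k ^ n * (u k n + mu k ^ Suc n)"
    using u_Suc_mult_root[OF mu_root, of k n] by simp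
  also have "\<dots> \<ge> mu k ^ n * u k n"
    using mu_pos[of k] by (simp add: algebra_simps)
  finally show ?case using step.IH by linarith
qed simp

definition rho_gap :: "nat \<Rightarrow> nat \<Rightarrow> real" where
  "rho_gap k n = (mu k + mu k ^ n) / (u k n + 1)"

lemma rho_eq_gap: "rho k n = 1 + mu k - rho_gap k n"
proof (cases n)
  case (Suc m)
  have "u k m = mu k * u k n - mu k ^ n"
    using u_Suc_mult_root[OF mu_root, of k m] Suc by simp
  moreover have "0 < u k n + 1"
    using u_ge[of n k] by linarith
  ultimately show ?thesis
    using Suc by (simp add: rho_def rho_gap_def field_simps)
qed (simp add: rho_def rho_gap_def)

lemma rho_gap_tendsto_0: "rho_gap k \<longlonglongrightarrow> 0"
proof (rule tendsto_sandwich[where f = "\<lambda>_. 0" and h = "\<lambda>n. 2 * inverse (real (Suc n))"])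
  have denom: "real (Suc n) \<le> u k n + 1" for n
    using u_ge[of n k] by linarith
  have numer: "0 < mu k + mu k ^ n" "mu k + mu k ^ n \<le> 2" for n
    using mu_pos[of k] mu_le_one[of k] power_le_one[of "mu k" n] by (simp_all add: add_pos_pos)
  show "\<forall>\<^sub>F n in sequentially. 0 \<le> rho_gap k n"
  proof (intro always_eventually allI)
    fix n
    show "0 \<le> rho_gap k n"
      unfolding rho_gap_def using numer(1)[of n] denom[of n] by (intro divide_nonneg_pos) auto
  qed
  show "\<forall>\<^sub>F n in sequentially. rho_gap k n \<le> 2 * inverse (real (Suc n))"
  proof (intro always_eventually allI)
    fix n
    have "rho_gap k n \<le> 2 / (u k n + 1)"
      unfolding rho_gap_def using numer[of n] denom[of n] by (intro divide_right_mono) auto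
    also have "\<dots> \<le> 2 / (real (Suc n))"
      using denom[of n] by (intro divide_left_mono) auto
    finally show "rho_gap k n \<le> 2 * inverse (real (Suc n))"
      by (simp add: field_simps)
  qed
  show "(\<lambda>n. 2 * inverse (real (Suc n))) \<longlonglongrightarrow> 0"
    using tendsto_mult_right_zero[OF LIMSEQ_inverse_real_of_nat] .
qed simp

lemma rho_inf_eq: "rho_inf k = 1 + mu k"
proof -
  have "rho k \<longlonglongrightarrow> 1 + mu k - 0"
    unfolding rho_eq_gap by (intro tendsto_intros rho_gap_tendsto_0)
  then show ?thesis
    unfolding rho_inf_def by (simp add: limI)
qed

lemma rho_gap_cross_mult_ineq:
  fixes \<mu> a A :: real
  assumes "0 < \<mu>" "\<mu> \<le> 1" "0 < a" "a \<le> \<mu>" "\<mu> \<le> a * A"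
    and B: "\<mu> * (B + 1) = A + \<mu> * (1 + a)"
  shows "(1 - \<mu> + \<mu>\<^sup>2) * (1 + a) * (A + 1) < (\<mu> + a) * (B + 1)"
proof -
  have "a * 1 \<le> a * A"
    using assms(4,5) by linarith
  then have "1 \<le> A"
    using \<open>0 < a\<close> by (simp only: mult_le_cancel_left_pos)
  have "\<mu> * a \<le> \<mu> * \<mu>"
    using assms by (intro mult_left_mono) auto
  moreover have "0 \<le> \<mu> * \<mu>" "0 \<le> \<mu> * \<mu> * \<mu>" "0 \<le> \<mu> * \<mu> * a"
    using assms by simp_all
  moreover have "\<mu> * (1 - \<mu>) * (1 + a) = \<mu> + \<mu> * a - \<mu> * \<mu> - \<mu> * \<mu> * a"
    and "\<mu> * (1 + \<mu>\<^sup>2) + \<mu>\<^sup>2 = \<mu> + \<mu> * \<mu> * \<mu> + \<mu> * \<mu>"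
    by (simp_all add: power2_eq_square algebra_simps)
  ultimately have "\<mu> * (1 - \<mu>) * (1 + a) \<le> \<mu> * (1 + \<mu>\<^sup>2) + \<mu>\<^sup>2"
    by linarith
  also have "\<dots> \<le> (a * A) * (1 + \<mu>\<^sup>2) + A * \<mu>\<^sup>2"
    using assms \<open>1 \<le> A\<close> by (intro add_mono mult_right_mono) auto
  finally have "(1 - \<mu>) * (\<mu> * (1 - \<mu>) * (1 + a)) \<le> (1 - \<mu>) * (A * (a * (1 + \<mu>\<^sup>2) + \<mu>\<^sup>2))"
    using assms by (intro mult_left_mono) (auto simp: algebra_simps)
  \<comment> \<open>Only the constant term can be negative; the slope in A pays for it since A \<ge> mu / a.\<close>
  moreover have "(\<mu> + a) * (A + \<mu> * (1 + a)) - (1 - \<mu> + \<mu>\<^sup>2) * \<mu> * (1 + a) * (A + 1)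
      = (1 - \<mu>) * (A * (a * (1 + \<mu>\<^sup>2) + \<mu>\<^sup>2)) + \<mu> * (1 + a) * (a - (1 - \<mu>)\<^sup>2)"
    by (simp add: power2_eq_square algebra_simps)
  moreover have "(1 - \<mu>) * (\<mu> * (1 - \<mu>) * (1 + a)) + \<mu> * (1 + a) * (a - (1 - \<mu>)\<^sup>2) = \<mu> * (1 + a) * a"
    by (simp add: power2_eq_square algebra_simps)
  moreover have "0 < \<mu> * (1 + a) * a"
    using assms by simp
  ultimately have "\<mu> * ((1 - \<mu> + \<mu>\<^sup>2) * (1 + a) * (A + 1)) < \<mu> * ((\<mu> + a) * (B + 1))"
    unfolding mult.left_commute[of \<mu> "\<mu> + a"] B by (simp add: algebra_simps)
  then show ?thesis
    using \<open>0 < \<mu>\<close> by simp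
qed

lemma rho_gap_Suc_less: "(real k + 1) * rho_gap k (Suc n) < rho_gap k n"
proof -
  define \<mu> where "\<mu> = mu k"
  have "0 < \<mu>" "\<mu> \<le> 1"
    unfolding \<mu>_def by (fact mu_pos mu_le_one)+
  have Suc_k_mu: "(real k + 1) * \<mu> = 1 - \<mu> + \<mu>\<^sup>2"
    using mu_root[of k] unfolding \<mu>_def by algebra
  show ?thesis
  proof (cases n)
    case 0
    have "\<mu> * \<mu> < 2 * \<mu>"
      using \<open>0 < \<mu>\<close> \<open>\<mu> \<le> 1\<close> by simp
    then show ?thesis
      using 0 Suc_k_mu by (simp add: rho_gap_def flip: \<mu>_def) (simp add: power2_eq_square)
  next
    case (Suc m)
    define a A B where "a = \<mu> ^ n" and "A = u k n" and "B = u k (Suc n)"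
    have "0 < a" "a \<le> \<mu>"
      unfolding a_def using \<open>0 < \<mu>\<close> \<open>\<mu> \<le> 1\<close> Suc by (simp_all add: power_le_one)
    moreover have "\<mu> \<le> a * A"
      unfolding a_def A_def \<mu>_def using Suc by (intro mu_le_mu_pow_mult_u) simp
    moreover have "\<mu> * (B + 1) = A + \<mu> * (1 + a)"
      using u_Suc_mult_root[OF mu_root, of k n] unfolding a_def A_def B_def \<mu>_def
      by (simp add: algebra_simps)
    ultimately have "(1 - \<mu> + \<mu>\<^sup>2) * (1 + a) * (A + 1) < (\<mu> + a) * (B + 1)"
      using \<open>0 < \<mu>\<close> \<open>\<mu> \<le> 1\<close> by (intro rho_gap_cross_mult_ineq)
    moreover have "0 < A + 1" "0 < B + 1"
      unfolding A_def B_def using u_ge[of n k] u_ge[of "Suc n" k] by linarith+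
    ultimately have "(1 - \<mu> + \<mu>\<^sup>2) * (1 + a) / (B + 1) < (\<mu> + a) / (A + 1)"
      by (simp add: field_simps)
    then show ?thesis
      unfolding rho_gap_def a_def A_def B_def \<mu>_def[symmetric] Suc_k_mu[symmetric]
      by (simp add: algebra_simps)
  qed
qed

theorem lemma3:
  fixes k n :: nat
  shows "rho k n + real k * rho_inf k < (real k + 1) * rho k (n + 1)"
  using rho_gap_Suc_less[of k n]
  by (simp add: rho_eq_gap rho_inf_eq algebra_simps)

end
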